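(* (a) Let $h\in\omega$ and let $(p_i)_{i<\pi(h)}$ be conditions of $\tilde{\mathbb E}$ that all contain a common node $s$ of height $h$ which lies above (i.e., extends) the stem of each $p_i$. Then there is $q\in\tilde{\mathbb E}$ with $q\le p_i$ for all $i<\pi(h)$. (b) $\tilde{\mathbb E}$ is $(\rho,\pi)$-linked; in particular it is ccc. (c) The generic branch $\eta\in\lim(T^* )$ added by $\tilde{\mathbb E}$ is eventually different from every real of the ground model, i.e., for every $x\in\omega^\omega\cap V$ we have $\eta(n)\ne x(n)$ for all but finitely many $n$. (d) If $p\in\tilde{\mathbb E}$ is such that $\operatorname{loss}(p)$ is defined and $s=\operatorname{stem}(p)$, then for every $h>|s|$, \[ \frac{|p\cap\omega^h|}{|T^*\cap\omega^h\cap[s]|}\ge1-\tfrac12\operatorname{loss}(p). \]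
   Context: The tree $T^*\subseteq\omega^{<\omega}$ and associated functions are defined by simultaneous induction on the height $h\ge0$: $T^*\cap\omega^0=\{\langle\rangle\}$; given $T^*\cap\omega^h$, put $\rho(h)=\max(|T^*\cap\omega^h|,h+2)$, $\pi(h)=\big((h+1)^2\rho(h)^{h+1}\big)^{\rho(h)^h}$, $a(h)=\pi(h)^{h+2}$, $M(h)=a(h)^2$; for every $s\in T^*\cap\omega^h$ let $\Omega_s=\{s^\frown\ell:\ \ell<M(h)\}$ (this defines $T^*\cap\omega^{h+1}$). For integers $0\le n<M(h)$ set $\mu_h(n)=\log_{a(h)}\big(\frac{M(h)}{M(h)-n}\big)$ and $\mu_h(M(h))=\infty$; for $s$ of height $h$ and $A\subseteq\Omega_s$ put $\mu_s(A)=\mu_h(|A|)$. For a subtree $p\subseteq T^*$ and $s\in p$ let $\mu_s(p)=\mu_s(\{t\in p: t\in\Omega_s\})$; the stem of $p$ is its shortest splitting node, and "$t\in p$ above the stem" means $t\in p$ extends the stem. $\lim(p)$ is the set of $x\in\omega^\omega$ with $x\restriction n\in p$ for all $n$, and $[s]$ is the set of nodes of $T^*$ comparable with $s$. $\tilde{\mathbb E}$ is the set of subtrees $p\subseteq T^*$ whose stem has some height $h^*$ and such that $\mu_t(p)\ge1+\frac1{h^*}$ for all $t\in p$ above the stem (for $h^*=0$ this forces $p=T^*$), ordered by inclusion ($q\le p$ iff $q\subseteq p$). $\operatorname{loss}(p)$ is defined iff there is an integer $m\ge2$ such that the stem of $p$ has height $h^*>3m$ and $\mu_s(p)\ge1+\frac1m$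 for all $s\in p$ of height $\ge h^*$; then $\operatorname{loss}(p)=\frac1m$ for the maximal such $m$. For functions $f,g:\omega\to\omega$ tending to infinity, a forcing $Q$ is $(f,g)$-linked if there are sets $Q^i_j\subseteq Q$ ($i<\omega$, $j<f(i)$), each $g(i)$-linked (any $g(i)$ of its elements have a common extension), such that every $q\in Q$ belongs to $\bigcup_{j<f(i)}Q^i_j$ for all sufficiently large $i$. *)

theory Defs
  imports Complex_Main "HOL-Library.Extended_Real" "HOL-Library.Sublist"
begin

text \<open>Nodes of \<omega>^{<\<omega>} are lists of naturals; s\<frown>l is s @ [l]; height is length.\<close>

fun Tlev :: "nat \<Rightarrow> nat list set" where
  "Tlev 0 = {[]}"
| "Tlev (Suc h) =
     (let N = card (Tlev h);
          r = max N (h + 2);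
          pp = ((h + 1)^2 * r^(h + 1))^(r^h);
          aa = pp^(h + 2);
          MM = aa^2
      in {s @ [l] | s l. s \<in> Tlev h \<and> l < MM})"

definition Tstar :: "nat list set" where
  "Tstar = (\<Union>h. Tlev h)"

definition rho :: "nat \<Rightarrow> nat" where
  "rho h = max (card (Tlev h)) (h + 2)"

definition pi_fun :: "nat \<Rightarrow> nat" where
  "pi_fun h = ((h + 1)^2 * rho h^(h + 1))^(rho h^h)"

definition a_fun :: "nat \<Rightarrow> nat" where
  "a_fun h = pi_fun h^(h + 2)"

definition M_fun :: "nat \<Rightarrow> nat" where
  "M_fun h = a_fun h^2"

definition Omega :: "nat list \<Rightarrow> nat list set" where
  "Omega s = {s @ [l] | l. l < M_fun (length s)}"

definition mu_h :: "nat \<Rightarrow> nat \<Rightarrow> ereal" where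
  "mu_h h n = (if n < M_fun h
     then ereal (log (real (a_fun h)) (real (M_fun h) / (real (M_fun h) - real n)))
     else \<infinity>)"

definition mu_set :: "nat list \<Rightarrow> nat list set \<Rightarrow> ereal" where
  "mu_set s A = mu_h (length s) (card A)"

definition succs :: "nat list set \<Rightarrow> nat list \<Rightarrow> nat list set" where
  "succs p s = {t \<in> p. t \<in> Omega s}"

definition mu_node :: "nat list set \<Rightarrow> nat list \<Rightarrow> ereal" where
  "mu_node p s = mu_set s (succs p s)"

definition subtree :: "nat list set \<Rightarrow> bool" where
  "subtree p \<longleftrightarrow> p \<subseteq> Tstar \<and> p \<noteq> {} \<and> (\<forall>t\<in>p. \<forall>u. prefix u t \<longrightarrow> u \<in> p)"

definition splitting :: "nat list set \<Rightarrow> nat list \<Rightarrow> bool" where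
  "splitting p s \<longleftrightarrow> s \<in> p \<and> card {t \<in> p. \<exists>l. t = s @ [l]} \<ge> 2"

definition is_stem :: "nat list set \<Rightarrow> nat list \<Rightarrow> bool" where
  "is_stem p s \<longleftrightarrow> splitting p s \<and>
     (\<forall>t. splitting p t \<and> t \<noteq> s \<longrightarrow> length s < length t)"

definition stem :: "nat list set \<Rightarrow> nat list" where
  "stem p = (THE s. is_stem p s)"

text \<open>Threshold 1 + 1/h*, with 1/0 read as \<infinity> (so h* = 0 forces p = T*).\<close>
definition thr :: "nat \<Rightarrow> ereal" where
  "thr h = (if h = 0 then \<infinity> else ereal (1 + 1 / real h))"

definition Etilde :: "nat list set set" where
  "Etilde = {p. subtree p \<and> (\<exists>s. is_stem p s \<and>
      (\<forall>t\<in>p. prefix s t \<longrightarrow> mu_node p t \<ge> thr (length s)))}"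

definition loss_ok :: "nat list set \<Rightarrow> nat \<Rightarrow> bool" where
  "loss_ok p m \<longleftrightarrow> m \<ge> 2 \<and> length (stem p) > 3 * m \<and>
     (\<forall>s\<in>p. length s \<ge> length (stem p) \<longrightarrow> mu_node p s \<ge> ereal (1 + 1 / real m))"

definition loss_defined :: "nat list set \<Rightarrow> bool" where
  "loss_defined p \<longleftrightarrow> (\<exists>m. loss_ok p m)"

definition loss :: "nat list set \<Rightarrow> real" where
  "loss p = 1 / real (GREATEST m. loss_ok p m)"

text \<open>Abstract forcing notions: a set Q of conditions with order le (le q p = q is stronger).\<close>
definition linked_set :: "nat \<Rightarrow> 'a set \<Rightarrow> 'a set \<Rightarrow> ('a \<Rightarrow> 'a \<Rightarrow> bool) \<Rightarrow> bool" where
  "linked_set k A Q le \<longleftrightarrow> (\<forall>x :: nat \<Rightarrow> 'a. (\<forall>i<k. x i \<in> A) \<longrightarrow>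
      (\<exists>r\<in>Q. \<forall>i<k. le r (x i)))"

definition fg_linked :: "(nat \<Rightarrow> nat) \<Rightarrow> (nat \<Rightarrow> nat) \<Rightarrow> 'a set \<Rightarrow> ('a \<Rightarrow> 'a \<Rightarrow> bool) \<Rightarrow> bool" where
  "fg_linked f g Q le \<longleftrightarrow>
     filterlim f at_top sequentially \<and> filterlim g at_top sequentially \<and>
     (\<exists>QQ :: nat \<Rightarrow> nat \<Rightarrow> 'a set.
        (\<forall>i j. j < f i \<longrightarrow> QQ i j \<subseteq> Q \<and> linked_set (g i) (QQ i j) Q le) \<and>
        (\<forall>q\<in>Q. \<forall>\<^sub>F i in sequentially. \<exists>j<f i. q \<in> QQ i j))"

definition compatible :: "'a set \<Rightarrow> ('a \<Rightarrow> 'a \<Rightarrow> bool) \<Rightarrow> 'a \<Rightarrow> 'a \<Rightarrow> bool" where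
  "compatible Q le p q \<longleftrightarrow> (\<exists>r\<in>Q. le r p \<and> le r q)"

definition ccc :: "'a set \<Rightarrow> ('a \<Rightarrow> 'a \<Rightarrow> bool) \<Rightarrow> bool" where
  "ccc Q le \<longleftrightarrow> (\<forall>A \<subseteq> Q. (\<forall>p\<in>A. \<forall>q\<in>A. p \<noteq> q \<longrightarrow> \<not> compatible Q le p q)
      \<longrightarrow> countable A)"

text \<open>q forces that the generic branch avoids x from position n on:
  no node t of q has t!m = x m for some m \<ge> n.\<close>
definition avoids_from :: "nat list set \<Rightarrow> (nat \<Rightarrow> nat) \<Rightarrow> nat \<Rightarrow> bool" where
  "avoids_from q x n \<longleftrightarrow> (\<forall>t\<in>q. \<forall>m. n \<le> m \<and> m < length t \<longrightarrow> t ! m \<noteq> x m)"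

end

theory Submission
  imports Defs
begin

text \<open>
  The proofs are driven by the deficit of a node u in a tree p: the number of immediate
  successors of u in T* that p omits. Since M(h) = a(h)^2, the norm satisfies
  \<open>\<mu>\<^sub>u(p) \<ge> 2 - e\<close> exactly when the deficit is at most \<open>a(|u|)^e\<close>, so a condition with
  stem height h* has deficits at most \<open>a^(1 - 1/h*)\<close> above its stem.

  (a) Intersecting \<open>\<pi>(h)\<close> conditions adds up their deficits, which stay below
  \<open>\<pi>(h) a^(1 - 1/(h+1))\<close>. Keeping only the nodes comparable with one branch node t of
  height 2(h+1) lifts the stem to t, and above t the factor \<open>\<pi>(|u|) \<le> a(|u|)^(1/(2(h+1)))\<close>
  is absorbed by the weaker threshold \<open>1 + 1/(2(h+1))\<close>. (c) is the same construction
  applied to p with all successors \<open>u\<frown>x(|u|)\<close> above the stem removed, which raises each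
  deficit by at most one. (b) indexes the linked families by the nodes of a level of T*
  and applies (a); ccc follows from \<open>(f,g)\<close>-linkedness alone. (d) Above the stem each
  node keeps at least \<open>M - a\<close> of its M successors, so at height h the tree keeps a
  proportion of at least \<open>1 - \<Sum>\<^bsub>l \<ge> |s|\<^esub> 1/a(l) \<ge> 1 - 2^-(|s|+1)\<close> of the cone above s,
  and \<open>2^-(|s|+1) \<le> loss/2\<close> because \<open>3m < |s|\<close>.
\<close>

section \<open>The tree T* and its growth constants\<close>

lemma Tlev_Suc: "Tlev (Suc h) = {s @ [l] | s l. s \<in> Tlev h \<and> l < M_fun h}"
  by (simp add: Let_def M_fun_def a_fun_def pi_fun_def rho_def)

declare Tlev.simps(2)[simp del]

lemma length_Tlev: "t \<in> Tlev h \<Longrightarrow> length t = h"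
  by (induction h arbitrary: t) (auto simp: Tlev_Suc)

lemma finite_Tlev: "finite (Tlev h)"
  by (induction h) (simp_all add: Tlev_Suc finite_image_set2)

lemma in_Tstar_iff: "t \<in> Tstar \<longleftrightarrow> t \<in> Tlev (length t)"
  by (auto simp: Tstar_def dest: length_Tlev)

lemma snoc_in_Tstar_iff: "u @ [l] \<in> Tstar \<longleftrightarrow> u \<in> Tstar \<and> l < M_fun (length u)"
  by (auto simp: in_Tstar_iff Tlev_Suc)

lemma pi_fun_ge: "h + 2 \<le> pi_fun h"
proof -
  define r where "r = rho h"
  have r: "h + 2 \<le> r" by (simp add: r_def rho_def)
  have "r \<le> r ^ (h + 1)"
    using r by (intro self_le_power) auto
  also have "\<dots> \<le> (h + 1)^2 * r ^ (h + 1)"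
    by simp
  also have "\<dots> \<le> ((h + 1)^2 * r ^ (h + 1)) ^ (r ^ h)"
    using r by (intro self_le_power) auto
  finally show ?thesis
    using r by (simp add: pi_fun_def r_def)
qed

lemma M_fun_pos: "0 < M_fun h"
  using pi_fun_ge[of h] by (simp add: M_fun_def a_fun_def)

lemma card_Tlev_le_Suc: "card (Tlev h) \<le> card (Tlev (Suc h))"
proof -
  have "(\<lambda>s. s @ [0]) ` Tlev h \<subseteq> Tlev (Suc h)"
    using M_fun_pos[of h] by (auto simp: Tlev_Suc)
  moreover have "inj_on (\<lambda>s. s @ [0]) (Tlev h)"
    by (simp add: inj_on_def)
  ultimately show ?thesis
    by (metis card_image card_mono finite_Tlev)
qed

lemma mono_rho: "mono rho"
  unfolding mono_iff_le_Suc rho_def by (intro allI max.mono card_Tlev_le_Suc) simp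

lemma mono_pi_fun: "mono pi_fun"
proof
  fix h h' :: nat
  assume "h \<le> h'"
  then have r: "rho h \<le> rho h'" "1 \<le> rho h"
    using mono_rho by (auto simp: mono_def rho_def)
  have pow_mono: "b ^ e \<le> b' ^ e'" if "1 \<le> b" "b \<le> b'" "e \<le> e'" for b b' e e' :: nat
    using power_increasing[OF that(3,1)] power_mono[OF that(2), of e'] by simp
  have base: "(h + 1)^2 * rho h ^ (h + 1) \<le> (h' + 1)^2 * rho h' ^ (h' + 1)"
    using \<open>h \<le> h'\<close> r by (intro mult_mono pow_mono) auto
  have exponent: "rho h ^ h \<le> rho h' ^ h'"
    using \<open>h \<le> h'\<close> r by (intro pow_mono) auto
  have "1 \<le> (h + 1)^2 * rho h ^ (h + 1)"
    using r by simp
  then show "pi_fun h \<le> pi_fun h'"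
    unfolding pi_fun_def using pow_mono[OF _ base exponent] by blast
qed

lemma pi_fun_le_a_fun: "pi_fun l \<le> a_fun l"
  unfolding a_fun_def using pi_fun_ge[of l] by (intro self_le_power) auto

lemma a_fun_ge: "2 ^ (l + 2) \<le> a_fun l"
  unfolding a_fun_def using pi_fun_ge[of l] by (intro power_mono) auto

lemma four_le_a_fun: "4 \<le> a_fun l"
  using order_trans[OF power_increasing[of 2 "l + 2" "2::nat"] a_fun_ge[of l]] by simp

lemma pi_fun_le_a_fun_powr:
  assumes "0 < H" "2 * H \<le> l + 2"
  shows "real (pi_fun l) \<le> real (a_fun l) powr (1 / (2 * real H))"
proof -
  have pi: "1 \<le> real (pi_fun l)"
    using pi_fun_ge[of l] by simp
  have "real (a_fun l) = real (pi_fun l) powr real (l + 2)"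
    using pi by (simp only: a_fun_def of_nat_power powr_realpow)
  then have "real (a_fun l) powr (1 / (2 * real H)) = real (pi_fun l) powr (real (l + 2) / (2 * H))"
    by (simp add: powr_powr)
  moreover have "1 \<le> real (l + 2) / (2 * H)"
    using assms by (simp add: field_simps)
  ultimately show ?thesis
    using pi powr_mono[of 1 "real (l + 2) / (2 * H)" "real (pi_fun l)"] by simp
qed

lemma a_fun_powr_less: "e < 1 \<Longrightarrow> real (a_fun l) powr e < real (a_fun l)"
  using powr_less_mono[of e 1 "real (a_fun l)"] four_le_a_fun[of l] by simp

section \<open>Deficits and the norm\<close>

definition deficit :: "nat list set \<Rightarrow> nat list \<Rightarrow> nat" where
  "deficit p u = card (Omega u - p)"

lemma Omega_eq_image: "Omega u = (\<lambda>l. u @ [l]) ` {..<M_fun (length u)}"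
  by (auto simp: Omega_def)

lemma finite_Omega: "finite (Omega u)"
  by (simp add: Omega_eq_image)

lemma card_Omega: "card (Omega u) = M_fun (length u)"
  by (simp add: Omega_eq_image card_image inj_on_def)

lemma deficit_le: "deficit p u \<le> M_fun (length u)"
  unfolding deficit_def card_Omega[symmetric] by (intro card_mono finite_Omega) auto

lemma card_succs: "card (succs p u) = M_fun (length u) - deficit p u"
proof -
  have "succs p u = Omega u \<inter> p"
    by (auto simp: succs_def)
  moreover have "card (Omega u \<inter> p) \<le> card (Omega u)"
    by (intro card_mono finite_Omega) auto
  ultimately show ?thesis
    using card_Diff_subset_Int[of "Omega u" p] finite_Omega[of u]
    by (simp add: deficit_def card_Omega)
qed

lemma mu_h_ge_iff:
  assumes "k \<le> M_fun l"
  shows "ereal (2 - e) \<le> mu_h l k \<longleftrightarrow> real (M_fun l - k) \<le> real (a_fun l) powr e"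
proof (cases "k = M_fun l")
  case True
  then show ?thesis by (simp add: mu_h_def)
next
  case False
  define A where "A = real (a_fun l)"
  define d where "d = real (M_fun l - k)"
  have A: "1 < A"
    using four_le_a_fun[of l] by (simp add: A_def)
  have d: "0 < d"
    using assms False by (simp add: d_def)
  have "log A (real (M_fun l) / d) = 2 - log A d"
    using A d by (simp add: A_def M_fun_def log_divide_pos)
  then have "mu_h l k = ereal (2 - log A d)"
    using assms False by (simp add: mu_h_def A_def d_def of_nat_diff)
  then show ?thesis
    using A d by (simp add: A_def[symmetric] d_def[symmetric] log_le_iff)
qed

lemma mu_node_ge_iff:
  "ereal (2 - e) \<le> mu_node p u \<longleftrightarrow> real (deficit p u) \<le> real (a_fun (length u)) powr e"
  using mu_h_ge_iff[of "card (succs p u)" "length u" e] deficit_le[of p u]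
  by (simp add: mu_node_def mu_set_def card_succs)

section \<open>Stems and conditions\<close>

lemma stem_eqI:
  assumes "is_stem p s"
  shows "stem p = s"
  unfolding stem_def
proof (rule the_equality)
  fix s'
  assume "is_stem p s'"
  then show "s' = s"
    using assms unfolding is_stem_def by (metis less_asym)
qed (fact assms)

lemma children_eq_succs: "p \<subseteq> Tstar \<Longrightarrow> {v \<in> p. \<exists>l. v = u @ [l]} = succs p u"
  by (auto simp: succs_def Omega_def snoc_in_Tstar_iff)

lemma is_stem_if_comparable:
  assumes split: "splitting q t" and comparable: "\<And>u. u \<in> q \<Longrightarrow> prefix u t \<or> prefix t u"
  shows "is_stem q t"
  unfolding is_stem_def
proof (intro conjI allI impI split)
  fix u
  assume u: "splitting q u \<and> u \<noteq> t"
  show "length t < length u"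
  proof (cases "prefix t u")
    case True
    then show ?thesis
      using u prefix_length_less by (auto simp: strict_prefix_def)
  next
    case False
    then have "strict_prefix u t"
      using comparable u by (auto simp: splitting_def strict_prefix_def)
    have "{v \<in> q. \<exists>l. v = u @ [l]} \<subseteq> {take (Suc (length u)) t}"
    proof
      fix v
      assume v: "v \<in> {v \<in> q. \<exists>l. v = u @ [l]}"
      then have "length v \<le> length t"
        using prefix_length_less[OF \<open>strict_prefix u t\<close>] by auto
      moreover have "prefix v t \<or> prefix t v"
        using comparable v by blast
      ultimately have "prefix v t"
        by (metis append_Nil2 append_eq_append_conv le_antisym prefix_def prefix_length_le)
      then show "v \<in> {take (Suc (length u)) t}"
        using v by (auto simp: prefix_def)
    qed
    then have "card {v \<in> q. \<exists>l. v = u @ [l]} \<le> 1"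
      using card_mono[of "{take (Suc (length u)) t}"] by fastforce
    then show ?thesis
      using u by (simp add: splitting_def)
  qed
qed

lemma Etilde_D:
  assumes "p \<in> Etilde"
  shows "subtree p" "is_stem p (stem p)"
    "\<And>t. t \<in> p \<Longrightarrow> prefix (stem p) t \<Longrightarrow> thr (length (stem p)) \<le> mu_node p t"
  using assms stem_eqI unfolding Etilde_def by auto

lemma stem_in_Etilde: "p \<in> Etilde \<Longrightarrow> stem p \<in> p"
  using Etilde_D(2) by (simp add: is_stem_def splitting_def)

lemma Etilde_deficit_le:
  assumes p: "p \<in> Etilde" and u: "u \<in> p" "prefix (stem p) u" and H: "length (stem p) < H"
  shows "real (deficit p u) \<le> real (a_fun (length u)) powr (1 - 1 / H)"
proof -
  have "ereal (2 - (1 - 1 / H)) \<le> thr (length (stem p))"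
    using H by (auto simp: thr_def frac_le)
  then show ?thesis
    using Etilde_D(3)[OF p u] mu_node_ge_iff order_trans by blast
qed

lemma EtildeI:
  assumes q: "subtree q" and t: "t \<in> q" "0 < length t"
    and comparable: "\<And>u. u \<in> q \<Longrightarrow> prefix u t \<or> prefix t u"
    and deficit: "\<And>u. u \<in> q \<Longrightarrow> prefix t u \<Longrightarrow>
      real (deficit q u) \<le> real (a_fun (length u)) powr (1 - 1 / length t)"
  shows "q \<in> Etilde"
proof -
  have "real (a_fun (length t)) powr (1 - 1 / length t) < real (a_fun (length t))"
    using t(2) by (intro a_fun_powr_less) simp
  then have "real (deficit q t) < real (a_fun (length t))"
    using deficit[OF t(1) prefix_order.refl] by linarith
  moreover have "4 * a_fun (length t) \<le> M_fun (length t)"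
    using four_le_a_fun[of "length t"] by (simp add: M_fun_def power2_eq_square)
  ultimately have "2 \<le> M_fun (length t) - deficit q t"
    using four_le_a_fun[of "length t"] by linarith
  then have "splitting q t"
    using q t children_eq_succs[of q t] by (simp add: splitting_def subtree_def card_succs)
  then have "is_stem q t"
    using comparable by (rule is_stem_if_comparable)
  moreover have "thr (length t) \<le> mu_node q u" if "u \<in> q" "prefix t u" for u
    using deficit[OF that] mu_node_ge_iff[of "1 - 1 / length t" q u] t(2)
    by (simp add: thr_def)
  ultimately show ?thesis
    using q by (auto simp: Etilde_def)
qed

lemma exists_extension_of_length:
  assumes "s \<in> Q" and succ: "\<And>u. u \<in> Q \<Longrightarrow> prefix s u \<Longrightarrow> \<exists>l. u @ [l] \<in> Q"
    and "length s \<le> n"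
  shows "\<exists>u\<in>Q. prefix s u \<and> length u = n"
  using \<open>length s \<le> n\<close>
proof (induction n rule: dec_induct)
  case base
  then show ?case using \<open>s \<in> Q\<close> by blast
next
  case (step n)
  then obtain u l where "u \<in> Q" "prefix s u" "length u = n" "u @ [l] \<in> Q"
    using succ by blast
  then show ?case
    by (intro bexI[of _ "u @ [l]"]) auto
qed

lemma exists_succ_if_deficit_less:
  assumes "deficit p u < M_fun (length u)"
  shows "\<exists>l. u @ [l] \<in> p"
proof -
  have "Omega u - p \<noteq> Omega u"
    using assms by (auto simp: deficit_def card_Omega)
  then show ?thesis
    by (auto simp: Omega_def)
qed

lemma deficit_less_M_fun:
  assumes "real (deficit p u) \<le> c * real (a_fun (length u)) powr e" "c \<le> real (a_fun (length u))" "e < 1"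
  shows "deficit p u < M_fun (length u)"
proof -
  define A where "A = real (a_fun (length u))"
  have "real (deficit p u) \<le> A * A powr e"
    using assms(1,2) by (simp add: A_def mult_right_mono order_trans)
  also have "\<dots> < A * A"
    using a_fun_powr_less[OF assms(3)] four_le_a_fun[of "length u"] by (simp add: A_def)
  finally show ?thesis
    by (simp add: A_def M_fun_def power2_eq_square flip: of_nat_mult)
qed

lemma Etilde_level_nonempty:
  assumes p: "p \<in> Etilde" and n: "length (stem p) \<le> n"
  shows "\<exists>u\<in>p. prefix (stem p) u \<and> length u = n"
proof (rule exists_extension_of_length[OF stem_in_Etilde[OF p] _ n])
  fix u
  assume u: "u \<in> p" "prefix (stem p) u"
  have "real (deficit p u) \<le> 1 * real (a_fun (length u)) powr (1 - 1 / Suc (length (stem p)))"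
    using Etilde_deficit_le[OF p u lessI] by simp
  then have "deficit p u < M_fun (length u)"
    by (rule deficit_less_M_fun) (use four_le_a_fun[of "length u"] in auto)
  then show "\<exists>l. u @ [l] \<in> p"
    by (rule exists_succ_if_deficit_less)
qed

section \<open>Thinning trees to conditions\<close>

lemma exists_Etilde_subset:
  assumes Q: "subtree Q" and s: "s \<in> Q" and H: "0 < H" "length s < 2 * H"
    and deficit: "\<And>u. u \<in> Q \<Longrightarrow> prefix s u \<Longrightarrow>
      real (deficit Q u) \<le> real (pi_fun (length u)) * real (a_fun (length u)) powr (1 - 1 / H)"
  shows "\<exists>q\<in>Etilde. q \<subseteq> Q"
proof -
  have "\<exists>l. u @ [l] \<in> Q" if "u \<in> Q" "prefix s u" for u
  proof (rule exists_succ_if_deficit_less)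
    show "deficit Q u < M_fun (length u)"
      by (rule deficit_less_M_fun[OF deficit[OF that]]) (use pi_fun_le_a_fun H(1) in auto)
  qed
  then obtain t where t: "t \<in> Q" "prefix s t" "length t = 2 * H"
    using exists_extension_of_length[OF s] H(2) by (metis less_imp_le)
  define q where "q = {u \<in> Q. prefix u t \<or> prefix t u}"
  have "subtree q"
    using Q t(1) unfolding subtree_def q_def
    by (auto intro: prefix_order.trans dest: prefix_same_cases)
  moreover have "real (deficit q u) \<le> real (a_fun (length u)) powr (1 - 1 / length t)"
    if "u \<in> q" "prefix t u" for u
  proof -
    define A where "A = real (a_fun (length u))"
    have "Omega u - q = Omega u - Q"
      using that(2) by (auto simp: Omega_def q_def)
    then have "real (deficit q u) \<le> real (pi_fun (length u)) * A powr (1 - 1 / H)"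
      using deficit[of u] that t(2) by (auto simp: deficit_def q_def A_def intro: prefix_order.trans)
    also have "\<dots> \<le> A powr (1 / (2 * real H)) * A powr (1 - 1 / H)"
      using pi_fun_le_a_fun_powr[OF H(1)] prefix_length_le[OF that(2)] t(3)
      by (intro mult_right_mono) (auto simp: A_def)
    also have "\<dots> = A powr (1 / (2 * real H) + (1 - 1 / H))"
      by (rule powr_add[symmetric])
    also have "1 / (2 * real H) + (1 - 1 / H) = 1 - 1 / length t"
      using H(1) t(3) by (simp add: field_simps)
    finally show ?thesis
      by (simp add: A_def)
  qed
  ultimately have "q \<in> Etilde"
    using t H(1) by (intro EtildeI[of q t]) (auto simp: q_def)
  moreover have "q \<subseteq> Q"
    by (simp add: q_def)
  ultimately show ?thesis
    by blast
qed

lemma deficit_INTER_le: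
  assumes "finite I"
  shows "deficit (\<Inter>i\<in>I. P i) u \<le> (\<Sum>i\<in>I. deficit (P i) u)"
proof -
  have "Omega u - (\<Inter>i\<in>I. P i) = (\<Union>i\<in>I. Omega u - P i)"
    by blast
  then show ?thesis
    unfolding deficit_def using card_UN_le[OF assms, of "\<lambda>i. Omega u - P i"] by simp
qed

lemma subtree_INTER:
  assumes "I \<noteq> {}" "\<And>i. i \<in> I \<Longrightarrow> subtree (P i)" "s \<in> (\<Inter>i\<in>I. P i)"
  shows "subtree (\<Inter>i\<in>I. P i)"
  unfolding subtree_def
proof (intro conjI ballI allI impI)
  show "(\<Inter>i\<in>I. P i) \<subseteq> Tstar"
    using assms(1,2) by (auto simp: subtree_def)
  show "(\<Inter>i\<in>I. P i) \<noteq> {}"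
    using assms(3) by blast
  fix t u
  assume "t \<in> (\<Inter>i\<in>I. P i)" "prefix u t"
  then show "u \<in> (\<Inter>i\<in>I. P i)"
    using assms(2) unfolding subtree_def by blast
qed

lemma Etilde_common_lower_bound:
  assumes s: "length s = h"
    and P: "\<And>i. i < pi_fun h \<Longrightarrow> P i \<in> Etilde \<and> s \<in> P i \<and> prefix (stem (P i)) s"
  shows "\<exists>q\<in>Etilde. \<forall>i<pi_fun h. q \<subseteq> P i"
proof -
  define Q where "Q = (\<Inter>i<pi_fun h. P i)"
  have "s \<in> Q"
    using P by (simp add: Q_def)
  moreover have "subtree Q"
    unfolding Q_def using pi_fun_ge[of h] P Etilde_D(1) \<open>s \<in> Q\<close>
    by (intro subtree_INTER) (auto simp: Q_def lessThan_empty_iff)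
  moreover have "real (deficit Q u)
      \<le> real (pi_fun (length u)) * real (a_fun (length u)) powr (1 - 1 / (h + 1))"
    if u: "u \<in> Q" "prefix s u" for u
  proof -
    have "real (deficit Q u) \<le> (\<Sum>i<pi_fun h. real (deficit (P i) u))"
      unfolding Q_def using deficit_INTER_le[of "{..<pi_fun h}" P u] by (simp flip: of_nat_sum)
    also have "\<dots> \<le> (\<Sum>i<pi_fun h. real (a_fun (length u)) powr (1 - 1 / (h + 1)))"
    proof (rule sum_mono)
      fix i
      assume "i \<in> {..<pi_fun h}"
      then have Pi: "P i \<in> Etilde" "u \<in> P i" "prefix (stem (P i)) s"
        using P u(1) by (auto simp: Q_def)
      moreover have "prefix (stem (P i)) u"
        using Pi(3) u(2) by (rule prefix_order.trans)
      moreover have "length (stem (P i)) < h + 1"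
        using prefix_length_le[OF Pi(3)] s by simp
      ultimately show "real (deficit (P i) u) \<le> real (a_fun (length u)) powr (1 - 1 / (h + 1))"
        using Etilde_deficit_le by (metis of_nat_add of_nat_1)
    qed
    also have "\<dots> \<le> real (pi_fun (length u)) * real (a_fun (length u)) powr (1 - 1 / (h + 1))"
      using mono_pi_fun prefix_length_le[OF u(2)] s by (simp add: mono_def mult_right_mono)
    finally show ?thesis .
  qed
  ultimately obtain q where "q \<in> Etilde" "q \<subseteq> Q"
    using exists_Etilde_subset[of Q s "h + 1"] \<open>s \<in> Q\<close> s by auto
  then show ?thesis
    by (auto simp: Q_def)
qed

definition avoiding_part :: "nat list set \<Rightarrow> (nat \<Rightarrow> nat) \<Rightarrow> nat \<Rightarrow> nat list set" where
  "avoiding_part p x N = {u \<in> p. \<forall>m. N \<le> m \<and> m < length u \<longrightarrow> u ! m \<noteq> x m}"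

lemma subtree_avoiding_part:
  assumes "subtree p" "s \<in> avoiding_part p x N"
  shows "subtree (avoiding_part p x N)"
  using assms unfolding subtree_def avoiding_part_def
  by (auto simp: prefix_def nth_append)

lemma deficit_avoiding_part_le:
  assumes "u \<in> avoiding_part p x N"
  shows "deficit (avoiding_part p x N) u \<le> deficit p u + 1"
proof -
  have "Omega u - avoiding_part p x N \<subseteq> insert (u @ [x (length u)]) (Omega u - p)"
    using assms by (auto simp: Omega_def avoiding_part_def nth_append less_Suc_eq)
  then have "deficit (avoiding_part p x N) u \<le> card (insert (u @ [x (length u)]) (Omega u - p))"
    unfolding deficit_def by (intro card_mono) (simp_all add: finite_Omega)
  also have "\<dots> \<le> deficit p u + 1"
    by (simp add: deficit_def card_insert_if finite_Omega)
  finally show ?thesis .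
qed

lemma Etilde_dense_avoids_from:
  assumes p: "p \<in> Etilde"
  shows "\<exists>q\<in>Etilde. q \<subseteq> p \<and> (\<exists>n. avoids_from q x n)"
proof -
  define N where "N = length (stem p)"
  define Q where "Q = avoiding_part p x N"
  define B where "B u = real (a_fun (length u)) powr (1 - 1 / (N + 1))" for u :: "nat list"
  have "stem p \<in> Q"
    using stem_in_Etilde[OF p] by (simp add: Q_def avoiding_part_def N_def)
  moreover have "subtree Q"
    using subtree_avoiding_part[OF Etilde_D(1)[OF p]] \<open>stem p \<in> Q\<close> by (simp add: Q_def)
  moreover have "real (deficit Q u) \<le> real (pi_fun (length u)) * B u"
    if u: "u \<in> Q" "prefix (stem p) u" for u
  proof -
    have "real (deficit Q u) \<le> real (deficit p u) + 1"
      using deficit_avoiding_part_le[of u p x N] u(1) by (simp add: Q_def)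
    also have "\<dots> \<le> B u + B u"
      using Etilde_deficit_le[OF p _ u(2), of "N + 1"] u(1) four_le_a_fun[of "length u"]
        ge_one_powr_ge_zero[of "real (a_fun (length u))" "1 - 1 / (N + 1)"]
      by (simp add: Q_def avoiding_part_def N_def B_def)
    also have "\<dots> \<le> real (pi_fun (length u)) * B u"
      using pi_fun_ge[of "length u"] mult_right_mono[of 2 "real (pi_fun (length u))" "B u"]
      by (simp add: B_def)
    finally show ?thesis .
  qed
  ultimately obtain q where q: "q \<in> Etilde" "q \<subseteq> Q"
    using exists_Etilde_subset[of Q "stem p" "N + 1"] by (auto simp: N_def B_def)
  then have "q \<subseteq> p" "avoids_from q x N"
    by (auto simp: Q_def avoiding_part_def avoids_from_def)
  then show ?thesis
    using q(1) by blast
qed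

section \<open>Linkedness and the ccc\<close>

lemma linked_set_compatible:
  assumes linked: "linked_set k A Q le" and k: "2 \<le> k" and "p \<in> A" "q \<in> A"
  shows "compatible Q le p q"
proof -
  define x where "x i = (if i = 0 then p else q)" for i :: nat
  have "\<forall>i<k. x i \<in> A"
    using \<open>p \<in> A\<close> \<open>q \<in> A\<close> by (simp add: x_def)
  then obtain r where r: "r \<in> Q" "\<forall>i<k. le r (x i)"
    using linked unfolding linked_set_def by blast
  have "le r p" "le r q"
    using r(2)[rule_format, of 0] r(2)[rule_format, of 1] k by (simp_all add: x_def)
  then show ?thesis
    using r(1) by (auto simp: compatible_def)
qed

lemma fg_linked_imp_ccc:
  assumes "fg_linked f g Q le"
  shows "ccc Q le"
proof -
  obtain QQ where g: "filterlim g at_top sequentially"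
    and linked: "\<And>i j. j < f i \<Longrightarrow> linked_set (g i) (QQ i j) Q le"
    and cover: "\<And>q. q \<in> Q \<Longrightarrow> \<forall>\<^sub>F i in sequentially. \<exists>j<f i. q \<in> QQ i j"
    using assms unfolding fg_linked_def by blast
  have "\<exists>ij. 2 \<le> g (fst ij) \<and> snd ij < f (fst ij) \<and> q \<in> QQ (fst ij) (snd ij)" if "q \<in> Q" for q
  proof -
    have "\<forall>\<^sub>F i in sequentially. 2 \<le> g i \<and> (\<exists>j<f i. q \<in> QQ i j)"
      using g cover[OF that] by (auto simp: filterlim_at_top intro: eventually_conj)
    then obtain i j where "2 \<le> g i" "j < f i" "q \<in> QQ i j"
      by (auto simp: eventually_sequentially)
    then show ?thesis
      by (intro exI[of _ "(i, j)"]) simp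
  qed
  then obtain F where F: "\<And>q. q \<in> Q \<Longrightarrow>
      2 \<le> g (fst (F q)) \<and> snd (F q) < f (fst (F q)) \<and> q \<in> QQ (fst (F q)) (snd (F q))"
    by metis
  show ?thesis
    unfolding ccc_def
  proof (intro allI impI)
    fix A
    assume A: "A \<subseteq> Q" "\<forall>p\<in>A. \<forall>q\<in>A. p \<noteq> q \<longrightarrow> \<not> compatible Q le p q"
    have "inj_on F A"
    proof (rule inj_onI)
      fix p q
      assume "p \<in> A" "q \<in> A" "F p = F q"
      then have ij: "2 \<le> g (fst (F p))" "snd (F p) < f (fst (F p))"
        "p \<in> QQ (fst (F p)) (snd (F p))" "q \<in> QQ (fst (F p)) (snd (F p))"
        using F[of p] F[of q] A(1) by auto
      then have "compatible Q le p q"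
        by (intro linked_set_compatible[OF linked[OF ij(2)] ij(1)])
      then show "p = q"
        using A \<open>p \<in> A\<close> \<open>q \<in> A\<close> by blast
    qed
    then show "countable A"
      by (rule countableI')
  qed
qed

lemma fg_linked_if_finite_families:
  fixes S :: "nat \<Rightarrow> 'b set" and C :: "nat \<Rightarrow> 'b \<Rightarrow> 'a set"
  assumes "filterlim f at_top sequentially" "filterlim g at_top sequentially"
    and g_pos: "\<And>i. 0 < g i"
    and S: "\<And>i. finite (S i)" "\<And>i. card (S i) \<le> f i"
    and C: "\<And>i u. u \<in> S i \<Longrightarrow> C i u \<subseteq> Q \<and> linked_set (g i) (C i u) Q le"
    and cover: "\<And>q. q \<in> Q \<Longrightarrow> \<forall>\<^sub>F i in sequentially. \<exists>u\<in>S i. q \<in> C i u"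
  shows "fg_linked f g Q le"
proof -
  obtain enum where enum: "\<And>i. bij_betw (enum i) {0..<card (S i)} (S i)"
    using ex_bij_betw_nat_finite[OF S(1)] by metis
  \<comment> \<open>Surplus indices get the empty family, which is \<open>g i\<close>-linked only because \<open>0 < g i\<close>.\<close>
  define QQ where "QQ i j = (if j < card (S i) then C i (enum i j) else {})" for i j
  have "QQ i j \<subseteq> Q \<and> linked_set (g i) (QQ i j) Q le" for i j
  proof (cases "j < card (S i)")
    case True
    then have "enum i j \<in> S i"
      using bij_betwE[OF enum[of i]] by simp
    then show ?thesis
      using C[of "enum i j" i] True by (simp add: QQ_def)
  next
    case False
    then show ?thesis
      using g_pos[of i] by (auto simp: QQ_def linked_set_def)
  qed
  moreover have "\<forall>\<^sub>F i in sequentially. \<exists>j<f i. q \<in> QQ i j" if "q \<in> Q" for q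
  proof (rule eventually_mono[OF cover[OF that]])
    fix i
    assume "\<exists>u\<in>S i. q \<in> C i u"
    then obtain j where "j < card (S i)" "q \<in> C i (enum i j)"
      using bij_betw_imp_surj_on[OF enum[of i]] by (metis atLeastLessThan_iff imageE)
    then show "\<exists>j<f i. q \<in> QQ i j"
      using S(2)[of i] by (intro exI[of _ j]) (simp add: QQ_def)
  qed
  ultimately show ?thesis
    using assms(1,2) unfolding fg_linked_def by blast
qed

lemma Etilde_fg_linked: "fg_linked rho pi_fun Etilde (\<subseteq>)"
proof (rule fg_linked_if_finite_families[where S = Tlev
      and C = "\<lambda>i u. {p \<in> Etilde. u \<in> p \<and> prefix (stem p) u}"])
  show "filterlim rho at_top sequentially"
    by (rule filterlim_at_top_mono[OF filterlim_ident always_eventually])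
      (simp add: rho_def le_max_iff_disj)
  show "filterlim pi_fun at_top sequentially"
    by (rule filterlim_at_top_mono[OF filterlim_ident always_eventually])
      (use pi_fun_ge add_leD1 in blast)
  show "0 < pi_fun i" "card (Tlev i) \<le> rho i" for i
    using pi_fun_ge[of i] by (simp_all add: rho_def)
  show "finite (Tlev i)" for i
    by (rule finite_Tlev)
  show "{p \<in> Etilde. u \<in> p \<and> prefix (stem p) u} \<subseteq> Etilde \<and>
      linked_set (pi_fun i) {p \<in> Etilde. u \<in> p \<and> prefix (stem p) u} Etilde (\<subseteq>)"
    if "u \<in> Tlev i" for i u
    using Etilde_common_lower_bound[OF length_Tlev[OF that]] by (auto simp: linked_set_def)
  show "\<forall>\<^sub>F i in sequentially. \<exists>u\<in>Tlev i. q \<in> {p \<in> Etilde. u \<in> p \<and> prefix (stem p) u}"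
    if q: "q \<in> Etilde" for q
  proof (rule eventually_sequentiallyI)
    fix i
    assume "length (stem q) \<le> i"
    then obtain u where "u \<in> q" "prefix (stem q) u" "length u = i"
      using Etilde_level_nonempty[OF q] by blast
    then show "\<exists>u\<in>Tlev i. q \<in> {p \<in> Etilde. u \<in> p \<and> prefix (stem p) u}"
      using q Etilde_D(1)[OF q] by (auto simp: subtree_def in_Tstar_iff)
  qed
qed

section \<open>Sizes of levels\<close>

definition level :: "nat list set \<Rightarrow> nat \<Rightarrow> nat list set" where
  "level X j = {t \<in> X. length t = j}"

definition cone :: "nat list \<Rightarrow> nat list set" where
  "cone s = {t \<in> Tstar. prefix s t \<or> prefix t s}"

lemma finite_level: "X \<subseteq> Tstar \<Longrightarrow> finite (level X j)"
  by (rule finite_subset[OF _ finite_Tlev[of j]]) (auto simp: level_def in_Tstar_iff)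

lemma sum_card_succs_le_card_level:
  assumes "p \<subseteq> Tstar"
  shows "(\<Sum>u\<in>level p j. card (succs p u)) \<le> card (level p (Suc j))"
proof -
  have "(\<Sum>u\<in>level p j. card (succs p u)) = card (\<Union>u\<in>level p j. succs p u)"
    using finite_level[OF assms] finite_Omega
    by (intro card_UN_disjoint[symmetric]) (auto simp: succs_def Omega_def intro: finite_subset)
  also have "\<dots> \<le> card (level p (Suc j))"
    using finite_level[OF assms] by (intro card_mono) (auto simp: level_def succs_def Omega_def)
  finally show ?thesis .
qed

lemma level_cone:
  assumes "length s \<le> j"
  shows "level (cone s) j = {t \<in> Tstar. prefix s t \<and> length t = j}"
proof -
  have "prefix s t" if "prefix t s" "length t = j" for t
    using prefix_length_prefix[of s s t] that assms by simp
  then show ?thesis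
    by (auto simp: level_def cone_def)
qed

lemma card_level_cone_Suc:
  assumes "length s \<le> j"
  shows "card (level (cone s) (Suc j)) = M_fun j * card (level (cone s) j)"
proof -
  have "level (cone s) (Suc j) = (\<Union>w\<in>level (cone s) j. Omega w)"
  proof (intro set_eqI iffI)
    fix t
    assume t: "t \<in> level (cone s) (Suc j)"
    then have "t \<noteq> []"
      by (auto simp: level_def)
    then obtain w l where "t = w @ [l]"
      by (cases t rule: rev_cases) auto
    then show "t \<in> (\<Union>w\<in>level (cone s) j. Omega w)"
      using t assms by (auto simp: level_cone Omega_def snoc_in_Tstar_iff)
  next
    fix t
    assume "t \<in> (\<Union>w\<in>level (cone s) j. Omega w)"
    then show "t \<in> level (cone s) (Suc j)"
      using assms by (auto simp: level_cone Omega_def snoc_in_Tstar_iff)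
  qed
  moreover have "finite (level (cone s) j)"
    by (rule finite_level) (auto simp: cone_def)
  then have "card (\<Union>w\<in>level (cone s) j. Omega w) = (\<Sum>w\<in>level (cone s) j. card (Omega w))"
    by (intro card_UN_disjoint finite_Omega ballI impI) (auto simp: Omega_def)
  ultimately show ?thesis
    by (simp add: card_Omega level_def)
qed

lemma card_level_cone_length_le: "card (level (cone s) (length s)) \<le> 1"
proof -
  have "level (cone s) (length s) \<subseteq> {s}"
    by (auto simp: level_def cone_def prefix_def)
  then show ?thesis
    using card_mono[of "{s}"] by fastforce
qed

lemma card_level_Suc_ge:
  assumes "p \<subseteq> Tstar" and "\<And>u. u \<in> level p j \<Longrightarrow> deficit p u \<le> a_fun j"
  shows "(real (M_fun j) - real (a_fun j)) * card (level p j) \<le> card (level p (Suc j))"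
proof -
  have "(M_fun j - a_fun j) * card (level p j) = (\<Sum>u\<in>level p j. M_fun j - a_fun j)"
    by simp
  also have "\<dots> \<le> (\<Sum>u\<in>level p j. card (succs p u))"
    using assms(2) by (intro sum_mono) (auto simp: card_succs level_def intro!: diff_le_mono2)
  also have "\<dots> \<le> card (level p (Suc j))"
    by (rule sum_card_succs_le_card_level[OF assms(1)])
  finally have "real ((M_fun j - a_fun j) * card (level p j)) \<le> card (level p (Suc j))"
    by linarith
  moreover have "a_fun j \<le> M_fun j"
    by (simp add: M_fun_def power2_eq_square)
  ultimately show ?thesis
    by (simp add: of_nat_diff)
qed

lemma card_level_ge:
  assumes p: "p \<subseteq> Tstar" "s \<in> p"
    and deficit: "\<And>u. u \<in> p \<Longrightarrow> length s \<le> length u \<Longrightarrow> deficit p u \<le> a_fun (length u)"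
    and j: "length s \<le> j"
  shows "(1 - (\<Sum>l=length s..<j. 1 / real (a_fun l))) * card (level (cone s) j) \<le> card (level p j)"
  using j
proof (induction j rule: dec_induct)
  case base
  have "s \<in> level p (length s)"
    using p by (simp add: level_def)
  then have "1 \<le> card (level p (length s))"
    using finite_level[OF p(1)] by (metis One_nat_def Suc_leI card_gt_0_iff empty_iff)
  then show ?case
    using card_level_cone_length_le[of s] by simp
next
  case (step j)
  define S where "S = (\<Sum>l=length s..<j. 1 / real (a_fun l))"
  define A where "A = real (a_fun j)"
  define D where "D = real (card (level (cone s) j))"
  define N where "N = real (card (level p j))"
  have A: "4 \<le> A"
    using four_le_a_fun[of j] by (simp add: A_def)
  have "S \<ge> 0" "D \<ge> 0"
    by (simp_all add: S_def D_def sum_nonneg)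
  have "(\<Sum>l=length s..<Suc j. 1 / real (a_fun l)) = S + 1 / A"
    using step.hyps(1) by (simp add: S_def A_def)
  moreover have "real (card (level (cone s) (Suc j))) = A * A * D"
    using card_level_cone_Suc[OF step.hyps(1)] by (simp add: A_def D_def M_fun_def power2_eq_square)
  ultimately have "(1 - (\<Sum>l=length s..<Suc j. 1 / real (a_fun l))) * card (level (cone s) (Suc j))
      = (1 - S - 1 / A) * (A * A * D)"
    by simp
  also have "\<dots> \<le> (1 - S) * D * (A * A - A)"
    \<comment> \<open>\<open>(1 - S) (1 - 1/A) \<ge> 1 - S - 1/A\<close> as \<open>S \<ge> 0\<close>\<close>
    using \<open>S \<ge> 0\<close> \<open>D \<ge> 0\<close> A by (simp add: algebra_simps)
  also have "\<dots> \<le> N * (A * A - A)"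
    using step.IH A by (intro mult_right_mono) (simp_all add: S_def D_def N_def)
  also have "\<dots> \<le> real (card (level p (Suc j)))"
  proof -
    have "deficit p u \<le> a_fun j" if "u \<in> level p j" for u
      using deficit step.hyps(1) that by (auto simp: level_def)
    then have "(real (M_fun j) - real (a_fun j)) * N \<le> real (card (level p (Suc j)))"
      unfolding N_def by (rule card_level_Suc_ge[OF p(1)])
    then show ?thesis
      by (simp add: A_def M_fun_def power2_eq_square mult.commute)
  qed
  finally show ?case .
qed

lemma sum_inverse_a_fun_le:
  assumes "0 < m" "m < L"
  shows "(\<Sum>l=L..<h. 1 / real (a_fun l)) \<le> 1 / (2 * real m)"
proof -
  have geometric: "(\<Sum>l=L..<h. (1 / 2 :: real) ^ (l + 2)) = (1 / 2) ^ (L + 1) - (1 / 2) ^ (h + 1)"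
    if "L \<le> h" for h
    using that by (induction h rule: dec_induct) simp_all
  have "(\<Sum>l=L..<h. 1 / real (a_fun l)) \<le> (\<Sum>l=L..<h. (1 / 2) ^ (l + 2))"
  proof (rule sum_mono)
    fix l
    have "(2::real) ^ (l + 2) \<le> real (a_fun l)"
      using a_fun_ge[of l] by (metis of_nat_le_iff of_nat_numeral of_nat_power)
    then show "1 / real (a_fun l) \<le> (1 / 2) ^ (l + 2)"
      unfolding power_one_over by (intro frac_le) auto
  qed
  also have "\<dots> \<le> (1 / 2) ^ (L + 1)"
    using geometric[of h] by (cases "L \<le> h") simp_all
  also have "\<dots> \<le> 1 / (2 * real m)"
  proof -
    have "m < 2 ^ L"
      using assms(2) less_exp[of L] by linarith
    then have "2 * m < 2 ^ (L + 1)"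
      by simp
    then show ?thesis
      unfolding power_one_over using assms(1) by (intro frac_le) (simp_all flip: of_nat_power)
  qed
  finally show ?thesis .
qed

lemma loss_ok_Greatest:
  assumes "loss_defined p"
  shows "loss_ok p (GREATEST m. loss_ok p m)"
proof -
  have "m \<le> length (stem p)" if "loss_ok p m" for m
    using that by (simp add: loss_ok_def)
  then show ?thesis
    using assms unfolding loss_defined_def by (metis GreatestI_ex_nat)
qed

lemma loss_ok_deficit_le:
  assumes "loss_ok p m" "u \<in> p" "length (stem p) \<le> length u"
  shows "deficit p u \<le> a_fun (length u)"
proof -
  have "real (deficit p u) \<le> real (a_fun (length u)) powr (1 - 1 / m)"
    using mu_node_ge_iff[of "1 - 1 / m" p u] assms by (simp add: loss_ok_def)
  also have "\<dots> < real (a_fun (length u))"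
    using assms(1) by (intro a_fun_powr_less) (simp add: loss_ok_def)
  finally show ?thesis
    by simp
qed

lemma Etilde_level_ratio_ge:
  assumes p: "p \<in> Etilde" and "loss_defined p" and h: "length (stem p) < h"
  shows "1 - loss p / 2 \<le> real (card (level p h)) / real (card (level (cone (stem p)) h))"
proof -
  define s where "s = stem p"
  define m where "m = (GREATEST m. loss_ok p m)"
  define S where "S = (\<Sum>l=length s..<h. 1 / real (a_fun l))"
  have m: "loss_ok p m"
    unfolding m_def by (rule loss_ok_Greatest) fact
  have "p \<subseteq> Tstar" "s \<in> p" "length s \<le> h"
    using Etilde_D(1)[OF p] stem_in_Etilde[OF p] h by (auto simp: subtree_def s_def)
  then have "(1 - S) * card (level (cone s) h) \<le> card (level p h)"
    unfolding S_def using loss_ok_deficit_le[OF m] by (intro card_level_ge) (auto simp: s_def)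
  moreover have "S \<le> 1 / (2 * real m)"
    using m unfolding S_def loss_ok_def s_def by (intro sum_inverse_a_fun_le) auto
  ultimately have "(1 - 1 / (2 * real m)) * card (level (cone s) h) \<le> card (level p h)"
    by (smt (verit) mult_right_mono of_nat_0_le_iff)
  moreover obtain u where "u \<in> p" "prefix s u" "length u = h"
    using Etilde_level_nonempty[OF p less_imp_le[OF h]] by (auto simp: s_def)
  then have "u \<in> level (cone s) h"
    using Etilde_D(1)[OF p] by (auto simp: level_def cone_def subtree_def)
  then have "0 < card (level (cone s) h)"
    using finite_level[of "cone s" h] by (auto simp: cone_def card_gt_0_iff)
  ultimately have "1 - 1 / (2 * real m) \<le> real (card (level p h)) / real (card (level (cone s) h))"
    by (simp add: pos_le_divide_eq)
  then show ?thesis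
    by (simp add: loss_def m_def s_def)
qed

theorem lemma1:
  shows "(\<forall>(h::nat) (s::nat list) (P::nat \<Rightarrow> nat list set).
            length s = h \<and> (\<forall>i<pi_fun h. P i \<in> Etilde \<and> s \<in> P i \<and> prefix (stem (P i)) s)
            \<longrightarrow> (\<exists>q\<in>Etilde. \<forall>i<pi_fun h. q \<subseteq> P i))
       \<and> fg_linked rho pi_fun Etilde (\<subseteq>)
       \<and> ccc Etilde (\<subseteq>)
       \<and> (\<forall>(x::nat \<Rightarrow> nat). \<forall>p\<in>Etilde. \<exists>q\<in>Etilde. q \<subseteq> p \<and> (\<exists>n. avoids_from q x n))
       \<and> (\<forall>p\<in>Etilde. \<forall>h::nat. loss_defined p \<and> h > length (stem p) \<longrightarrow>
            real (card {t \<in> p. length t = h})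
              / real (card {t \<in> Tstar. length t = h \<and> (prefix (stem p) t \<or> prefix t (stem p))})
            \<ge> 1 - loss p / 2)"
proof -
  have levels: "level p h = {t \<in> p. length t = h}"
    "level (cone s) h = {t \<in> Tstar. length t = h \<and> (prefix s t \<or> prefix t s)}" for p s h
    by (auto simp: level_def cone_def)
  show ?thesis
  proof (intro conjI allI impI ballI)
    show "fg_linked rho pi_fun Etilde (\<subseteq>)"
      by (rule Etilde_fg_linked)
    then show "ccc Etilde (\<subseteq>)"
      by (rule fg_linked_imp_ccc)
  qed (auto intro: Etilde_common_lower_bound Etilde_dense_avoids_from
      Etilde_level_ratio_ge[unfolded levels(2), unfolded levels(1)])
qed

end
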